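(* For any Kleinian group $\Gamma$, the set $C_\Gamma=\{\psi\in\mathrm{PSL}_2\mathbb{C}\;|\;\psi\Gamma\psi^{-1}\cap\Gamma\text{ is nonelementary}\}$ is countable.
   Context: A Kleinian group is a discrete torsion-free subgroup of $\mathrm{PSL}_2\mathbb{C}$; it is elementary if its limit set has at most two points (equivalently, it is abelian), and nonelementary otherwise. *)

theory Defs
  imports "HOL-Analysis.Analysis"
begin

typedef SL2C = "{A :: complex^2^2. det A = 1}" morphisms mat_of Abs_SL2C
  by (rule exI[of _ "mat 1"]) simp

lemma det_mat_of [simp]: "det (mat_of A) = 1"
  using mat_of by auto

text \<open>Adjugate of a 2x2 matrix (the inverse when the determinant is 1).\<close>
definition adj2 :: "complex^2^2 \<Rightarrow> complex^2^2" where
  "adj2 M = vector [vector [M$2$2, - M$1$2], vector [- M$2$1, M$1$1]]"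

lemma det_adj2: "det (adj2 M) = det M"
  by (simp add: adj2_def det_2 algebra_simps)

lemma adj2_neg: "adj2 (- M) = - adj2 M"
  by (simp add: adj2_def vec_eq_iff forall_2 vector_2)

lemma mat_mul_lneg: "(- A) ** (B :: complex^2^2) = - (A ** B)"
  by (simp add: matrix_matrix_mult_def vec_eq_iff sum_negf)

lemma mat_mul_rneg: "A ** (- B :: complex^2^2) = - (A ** B)"
  by (simp add: matrix_matrix_mult_def vec_eq_iff sum_negf)

definition sl2_mult :: "SL2C \<Rightarrow> SL2C \<Rightarrow> SL2C" where
  "sl2_mult A B = Abs_SL2C (mat_of A ** mat_of B)"

definition sl2_inv :: "SL2C \<Rightarrow> SL2C" where
  "sl2_inv A = Abs_SL2C (adj2 (mat_of A))"

lemma mat_of_sl2_mult: "mat_of (sl2_mult A B) = mat_of A ** mat_of B"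
  unfolding sl2_mult_def by (rule Abs_SL2C_inverse) (simp add: det_mul)

lemma mat_of_sl2_inv: "mat_of (sl2_inv A) = adj2 (mat_of A)"
  unfolding sl2_inv_def by (rule Abs_SL2C_inverse) (simp add: det_adj2)

definition sl2_rel :: "SL2C \<Rightarrow> SL2C \<Rightarrow> bool" where
  "sl2_rel A B \<longleftrightarrow> mat_of A = mat_of B \<or> mat_of A = - mat_of B"

lemma equivp_sl2_rel: "equivp sl2_rel"
  by (rule equivpI) (auto simp: reflp_def symp_def transp_def sl2_rel_def)

quotient_type PSL2C = SL2C / sl2_rel
  by (rule equivp_sl2_rel)

lift_definition psl_mult :: "PSL2C \<Rightarrow> PSL2C \<Rightarrow> PSL2C" is sl2_mult
  by (auto simp: sl2_rel_def mat_of_sl2_mult mat_mul_lneg mat_mul_rneg)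

lift_definition psl_inv :: "PSL2C \<Rightarrow> PSL2C" is sl2_inv
  by (auto simp: sl2_rel_def mat_of_sl2_inv adj2_neg)

lift_definition psl_one :: "PSL2C" is "Abs_SL2C (mat 1)" .

lift_definition psl_dist :: "PSL2C \<Rightarrow> PSL2C \<Rightarrow> real" is
  "\<lambda>A B. min (norm (mat_of A - mat_of B)) (norm (mat_of A + mat_of B))"
  by (auto simp: sl2_rel_def norm_minus_commute algebra_simps min.commute)

fun psl_pow :: "PSL2C \<Rightarrow> nat \<Rightarrow> PSL2C" where
  "psl_pow g 0 = psl_one"
| "psl_pow g (Suc n) = psl_mult g (psl_pow g n)"

section \<open>Moebius action on the Riemann sphere (None = infinity)\<close>

definition mobius_mat :: "complex^2^2 \<Rightarrow> complex option \<Rightarrow> complex option" where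
  "mobius_mat M z = (let a = M$1$1; b = M$1$2; c = M$2$1; d = M$2$2 in
     (case z of None \<Rightarrow> (if c = 0 then None else Some (a / c))
      | Some w \<Rightarrow> (if c * w + d = 0 then None else Some ((a * w + b) / (c * w + d)))))"

lift_definition psl_act :: "PSL2C \<Rightarrow> complex option \<Rightarrow> complex option" is
  "\<lambda>A. mobius_mat (mat_of A)"
proof -
  fix A B assume "sl2_rel A B"
  then show "mobius_mat (mat_of A) = mobius_mat (mat_of B)"
    unfolding sl2_rel_def
  proof
    assume "mat_of A = - mat_of B"
    then show ?thesis
      by (auto simp: fun_eq_iff mobius_mat_def Let_def split: option.splits)
         (auto simp: field_simps, metis add.commute add_eq_0_iff2 diff_conv_add_uminus minus_add_distrib,
          metis add.commute add_eq_0_iff2 diff_conv_add_uminus minus_add_distrib)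
  qed simp
qed

fun chordal :: "complex option \<Rightarrow> complex option \<Rightarrow> real" where
  "chordal None None = 0"
| "chordal (Some z) None = 2 / sqrt (1 + (cmod z)\<^sup>2)"
| "chordal None (Some w) = 2 / sqrt (1 + (cmod w)\<^sup>2)"
| "chordal (Some z) (Some w) =
     2 * cmod (z - w) / sqrt ((1 + (cmod z)\<^sup>2) * (1 + (cmod w)\<^sup>2))"

definition psl_subgroup :: "PSL2C set \<Rightarrow> bool" where
  "psl_subgroup G \<longleftrightarrow> psl_one \<in> G \<and> (\<forall>g\<in>G. \<forall>h\<in>G. psl_mult g h \<in> G)
     \<and> (\<forall>g\<in>G. psl_inv g \<in> G)"

definition psl_discrete :: "PSL2C set \<Rightarrow> bool" where
  "psl_discrete G \<longleftrightarrow> (\<forall>g\<in>G. \<exists>e>0. \<forall>h\<in>G. h \<noteq> g \<longrightarrow> e \<le> psl_dist g h)"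

definition torsion_free :: "PSL2C set \<Rightarrow> bool" where
  "torsion_free G \<longleftrightarrow> (\<forall>g\<in>G. \<forall>n>0. psl_pow g n = psl_one \<longrightarrow> g = psl_one)"

definition kleinian :: "PSL2C set \<Rightarrow> bool" where
  "kleinian G \<longleftrightarrow> psl_subgroup G \<and> psl_discrete G \<and> torsion_free G"

definition limit_set :: "PSL2C set \<Rightarrow> complex option set" where
  "limit_set G = {x. \<exists>z g. (\<forall>n. g n \<in> G) \<and> inj g \<and>
      (\<lambda>n. chordal (psl_act (g n) z) x) \<longlonglongrightarrow> 0}"

definition elementary :: "PSL2C set \<Rightarrow> bool" where
  "elementary G \<longleftrightarrow> finite (limit_set G) \<and> card (limit_set G) \<le> 2"

definition psl_conj_set :: "PSL2C \<Rightarrow> PSL2C set \<Rightarrow> PSL2C set" where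
  "psl_conj_set \<psi> G = (\<lambda>g. psl_mult (psl_mult \<psi> g) (psl_inv \<psi>)) ` G"

end

theory Submission
  imports Defs
begin

text \<open>
  Discreteness leaves only finitely many elements of a Kleinian group in each norm ball of
  SL(2,C); hence the group is countable, and an injective sequence in it escapes to infinity.

  An abelian subgroup is elementary. All its elements commute, as matrices, with one
  non-scalar matrix P (an anticommuting pair would produce an element of order two). Along an
  escaping sequence the normalized matrices accumulate at a nonzero singular matrix commuting
  with P; its image is an eigenline of P, so every limit point is one of the at most two
  fixed points of P.

  If psi Gamma psi^-1 \<inter> Gamma is nonelementary, it therefore contains two non-commuting
  elements h_i = psi g_i psi^-1 with g_i, h_i in Gamma. Two conjugators inducing the same
  matrix equations psi g_i psi^-1 = \<plusminus>h_i differ by a matrix commuting with two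
  non-commuting matrices, which is scalar; so psi is determined by the quadruple
  (g_1, g_2, h_1, h_2) together with the two signs, and there are countably many choices.
\<close>

lemma mat2_mult_nth: "((A::'a::comm_ring_1^2^2) ** B) $ i $ j = A$i$1 * B$1$j + A$i$2 * B$2$j"
  by (simp add: matrix_matrix_mult_def sum_2)

lemma mat2_mult_vec_nth: "((A::'a::comm_ring_1^2^2) *v u) $ i = A$i$1 * u$1 + A$i$2 * u$2"
  by (simp add: matrix_vector_mult_def sum_2)

lemma vec2_eq_iff: "(x::'a^2) = y \<longleftrightarrow> x$1 = y$1 \<and> x$2 = y$2"
  by (simp add: vec_eq_iff forall_2)

lemma vec2_nonzero_iff: "(u::'a::zero^2) \<noteq> 0 \<longleftrightarrow> u$1 \<noteq> 0 \<or> u$2 \<noteq> 0"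
  by (simp add: vec2_eq_iff)

lemma mat2_eq_iff:
  "(A::'a^2^2) = B \<longleftrightarrow> A$1$1 = B$1$1 \<and> A$1$2 = B$1$2 \<and> A$2$1 = B$2$1 \<and> A$2$2 = B$2$2"
  by (simp add: vec_eq_iff forall_2)

lemma mat2_one_nth [simp]:
  "(mat 1 :: 'a::{zero,one}^2^2) $ 1 $ 1 = 1" "(mat 1 :: 'a^2^2) $ 1 $ 2 = 0"
  "(mat 1 :: 'a^2^2) $ 2 $ 1 = 0" "(mat 1 :: 'a^2^2) $ 2 $ 2 = 1"
  by (simp_all add: mat_def)

lemma mat2_scaleR_nth: "(c *\<^sub>R (M::complex^2^2)) $ i $ j = of_real c * M$i$j"
  by (simp only: vector_scaleR_component) (simp add: scaleR_conv_of_real)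

lemma vec2_scaleR_nth: "(c *\<^sub>R (v::complex^2)) $ i = of_real c * v$i"
  by (simp only: vector_scaleR_component) (simp add: scaleR_conv_of_real)

lemma det_mat2_scaleR: "det (c *\<^sub>R (M::complex^2^2)) = of_real (c\<^sup>2) * det M"
  by (simp del: vector_scaleR_component add: det_2 mat2_scaleR_nth power2_eq_square algebra_simps)

lemma mat2_scaleR_mult:
  "(c *\<^sub>R (M::complex^2^2)) ** P = c *\<^sub>R (M ** P)"
  "P ** (c *\<^sub>R (M::complex^2^2)) = c *\<^sub>R (P ** M)"
  unfolding mat2_eq_iff
  by (simp_all del: vector_scaleR_component add: mat2_mult_nth mat2_scaleR_nth algebra_simps)

lemma mat2_scaleR_mult_vec: "(c *\<^sub>R (M::complex^2^2)) *v u = c *\<^sub>R (M *v u)"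
  unfolding vec2_eq_iff
  by (simp del: vector_scaleR_component add: mat2_mult_vec_nth vec2_scaleR_nth mat2_scaleR_nth
      algebra_simps)

lemma adj2_nth [simp]:
  "adj2 M $ 1 $ 1 = M$2$2" "adj2 M $ 1 $ 2 = - M$1$2"
  "adj2 M $ 2 $ 1 = - M$2$1" "adj2 M $ 2 $ 2 = M$1$1"
  by (simp_all add: adj2_def)

lemma adj2_mult: "det M = 1 \<Longrightarrow> adj2 M ** M = mat 1"
  by (simp add: mat2_eq_iff mat2_mult_nth det_2 algebra_simps)

lemma mult_adj2: "det M = 1 \<Longrightarrow> M ** adj2 M = mat 1"
  by (simp add: mat2_eq_iff mat2_mult_nth det_2 algebra_simps)

lemma mat2_mult_vec_nonzero:
  assumes "det (M::complex^2^2) = 1" "u \<noteq> 0"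
  shows "M *v u \<noteq> 0"
proof
  assume "M *v u = 0"
  then have "(adj2 M ** M) *v u = 0" by (simp add: matrix_vector_mul_assoc[symmetric])
  then show False using assms by (simp add: adj2_mult)
qed

lemma norm_vec2_le: "norm (x::'a::real_normed_vector^2) \<le> norm (x$1) + norm (x$2)"
  unfolding norm_vec_def by (rule order.trans[OF L2_set_le_sum]) (auto simp: sum_2)

lemma norm_mat2_le_entries:
  "norm (A::complex^2^2) \<le> cmod (A$1$1) + cmod (A$1$2) + cmod (A$2$1) + cmod (A$2$2)"
  using norm_vec2_le[of A] norm_vec2_le[of "A$1"] norm_vec2_le[of "A$2"] by simp

lemma norm_mat2_nth_le: "cmod ((A::complex^2^2) $ i $ j) \<le> norm A"
  using Finite_Cartesian_Product.norm_nth_le[of "A$i" j] Finite_Cartesian_Product.norm_nth_le[of A i]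
  by linarith

lemma norm_mat2_mult_le: "norm ((A::complex^2^2) ** (B::complex^2^2)) \<le> 8 * norm A * norm B"
proof -
  have entry: "cmod ((A ** B)$i$j) \<le> 2 * norm A * norm B" for i j
  proof -
    have "cmod ((A ** B)$i$j) \<le> cmod (A$i$1) * cmod (B$1$j) + cmod (A$i$2) * cmod (B$2$j)"
      unfolding mat2_mult_nth by (rule order.trans[OF norm_triangle_ineq]) (simp add: norm_mult)
    also have "\<dots> \<le> norm A * norm B + norm A * norm B"
      using norm_mat2_nth_le[of A i 1] norm_mat2_nth_le[of A i 2] norm_mat2_nth_le[of B 1 j]
        norm_mat2_nth_le[of B 2 j]
      by (intro add_mono mult_mono) auto
    finally show ?thesis by simp
  qed
  show ?thesis
    using norm_mat2_le_entries[of "A ** B"] entry[of 1 1] entry[of 1 2] entry[of 2 1] entry[of 2 2]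
    by linarith
qed

lemma norm_adj2_le: "norm (adj2 A) \<le> 4 * norm A"
  using norm_mat2_le_entries[of "adj2 A"] norm_mat2_nth_le[of A 1 1] norm_mat2_nth_le[of A 1 2]
    norm_mat2_nth_le[of A 2 1] norm_mat2_nth_le[of A 2 2]
  by simp

definition psl_mat :: "PSL2C \<Rightarrow> complex^2^2" where
  "psl_mat g = mat_of (rep_PSL2C g)"

lemma det_psl_mat [simp]: "det (psl_mat g) = 1"
  by (simp add: psl_mat_def)

lemma abs_PSL2C_eq_iff:
  "abs_PSL2C A = abs_PSL2C B \<longleftrightarrow> mat_of A = mat_of B \<or> mat_of A = - mat_of B"
  by (simp add: PSL2C.abs_eq_iff sl2_rel_def)

lemma psl_eq_iff: "g = h \<longleftrightarrow> psl_mat g = psl_mat h \<or> psl_mat g = - psl_mat h"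
  using abs_PSL2C_eq_iff[of "rep_PSL2C g" "rep_PSL2C h"]
  by (simp add: psl_mat_def Quotient_abs_rep[OF Quotient_PSL2C])

lemma psl_rep_eq: "g = abs_PSL2C (rep_PSL2C g)"
  by (simp add: Quotient_abs_rep[OF Quotient_PSL2C])

lemma psl_mult_rep: "psl_mult g h = abs_PSL2C (sl2_mult (rep_PSL2C g) (rep_PSL2C h))"
  by (subst (1 2) psl_rep_eq) (rule psl_mult.abs_eq)

lemma psl_mult_eq_iff:
  "psl_mult a b = psl_mult c d \<longleftrightarrow>
     psl_mat a ** psl_mat b = psl_mat c ** psl_mat d \<or> psl_mat a ** psl_mat b = - (psl_mat c ** psl_mat d)"
  unfolding psl_mult_rep abs_PSL2C_eq_iff by (simp add: mat_of_sl2_mult psl_mat_def)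

lemma psl_eq_one_iff: "g = psl_one \<longleftrightarrow> psl_mat g = mat 1 \<or> psl_mat g = - mat 1"
proof -
  have "mat_of (Abs_SL2C (mat 1)) = mat 1" by (simp add: Abs_SL2C_inverse)
  then show ?thesis
    using abs_PSL2C_eq_iff[of "rep_PSL2C g" "Abs_SL2C (mat 1)"]
    by (simp add: psl_one_def psl_mat_def flip: psl_rep_eq)
qed

lemma psl_conj_mat:
  "psl_mult (psl_mult p g) (psl_inv p) = h \<longleftrightarrow>
     psl_mat p ** psl_mat g ** adj2 (psl_mat p) = psl_mat h \<or>
     psl_mat p ** psl_mat g ** adj2 (psl_mat p) = - psl_mat h"
proof -
  have "psl_mult (psl_mult p g) (psl_inv p) =
      abs_PSL2C (sl2_mult (sl2_mult (rep_PSL2C p) (rep_PSL2C g)) (sl2_inv (rep_PSL2C p)))"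
    by (subst (1 2 3) psl_rep_eq) (simp only: psl_mult.abs_eq psl_inv.abs_eq)
  then show ?thesis
    by (subst (2) psl_rep_eq)
       (simp only: abs_PSL2C_eq_iff mat_of_sl2_mult mat_of_sl2_inv psl_mat_def)
qed

lemma psl_mult_assoc: "psl_mult (psl_mult a b) c = psl_mult a (psl_mult b c)"
proof (induct a rule: PSL2C.abs_induct)
  case (1 x) show ?case
  proof (induct b rule: PSL2C.abs_induct)
    case (1 y) show ?case
    proof (induct c rule: PSL2C.abs_induct)
      case (1 z) show ?case
        by (simp add: psl_mult.abs_eq abs_PSL2C_eq_iff mat_of_sl2_mult matrix_mul_assoc)
    qed
  qed
qed

lemma psl_one_mult [simp]: "psl_mult psl_one a = a"
  by (induct a rule: PSL2C.abs_induct)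
     (simp add: psl_one_def psl_mult.abs_eq abs_PSL2C_eq_iff mat_of_sl2_mult Abs_SL2C_inverse)

lemma psl_mult_one [simp]: "psl_mult a psl_one = a"
  by (induct a rule: PSL2C.abs_induct)
     (simp add: psl_one_def psl_mult.abs_eq abs_PSL2C_eq_iff mat_of_sl2_mult Abs_SL2C_inverse)

lemma psl_inv_mult [simp]: "psl_mult (psl_inv a) a = psl_one"
  by (induct a rule: PSL2C.abs_induct)
     (simp add: psl_one_def psl_mult.abs_eq psl_inv.abs_eq abs_PSL2C_eq_iff mat_of_sl2_mult
        mat_of_sl2_inv adj2_mult Abs_SL2C_inverse)

lemma psl_inv_mult_cancel: "psl_mult (psl_inv a) (psl_mult a x) = x"
  by (simp flip: psl_mult_assoc)

lemma psl_mult_left_cancel: "psl_mult a b = psl_mult a c \<Longrightarrow> b = c"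
  by (metis psl_inv_mult_cancel)

lemma psl_conj_mult:
  "psl_mult (psl_mult (psl_mult p a) (psl_inv p)) (psl_mult (psl_mult p b) (psl_inv p)) =
   psl_mult (psl_mult p (psl_mult a b)) (psl_inv p)"
  by (simp add: psl_mult_assoc psl_inv_mult_cancel)

lemma kleinian_one: "kleinian G \<Longrightarrow> psl_one \<in> G"
  by (simp add: kleinian_def psl_subgroup_def)

lemma kleinian_mult: "kleinian G \<Longrightarrow> a \<in> G \<Longrightarrow> b \<in> G \<Longrightarrow> psl_mult a b \<in> G"
  by (simp add: kleinian_def psl_subgroup_def)

lemma kleinian_inv: "kleinian G \<Longrightarrow> a \<in> G \<Longrightarrow> psl_inv a \<in> G"
  by (simp add: kleinian_def psl_subgroup_def)

section \<open>Discreteness\<close>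

lemma kleinian_dist_one:
  assumes "kleinian G"
  obtains e where "e > 0" "\<And>h. h \<in> G \<Longrightarrow> h \<noteq> psl_one \<Longrightarrow> e \<le> psl_dist psl_one h"
  using assms kleinian_one[OF assms] unfolding kleinian_def psl_discrete_def
  by (metis (no_types, lifting))

lemma psl_dist_one_le: "psl_dist psl_one (abs_PSL2C A) \<le> norm (mat 1 - mat_of A)"
  by (simp add: psl_one_def psl_dist.abs_eq Abs_SL2C_inverse)

lemma psl_dist_one_quotient_le:
  "psl_dist psl_one (psl_mult (psl_inv g) h) \<le> 32 * norm (psl_mat g) * norm (psl_mat g - psl_mat h)"
proof -
  let ?A = "psl_mat g" and ?B = "psl_mat h"
  have "psl_mult (psl_inv g) h = abs_PSL2C (sl2_mult (sl2_inv (rep_PSL2C g)) (rep_PSL2C h))"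
    by (subst (1 2) psl_rep_eq) (simp only: psl_inv.abs_eq psl_mult.abs_eq)
  then have "psl_dist psl_one (psl_mult (psl_inv g) h) \<le> norm (mat 1 - adj2 ?A ** ?B)"
    using psl_dist_one_le[of "sl2_mult (sl2_inv (rep_PSL2C g)) (rep_PSL2C h)"]
    by (simp add: mat_of_sl2_mult mat_of_sl2_inv psl_mat_def)
  also have "mat 1 - adj2 ?A ** ?B = adj2 ?A ** (?A - ?B)"
    by (metis adj2_mult add_diff_cancel det_psl_mat diff_add_cancel matrix_add_ldistrib)
  also have "norm (adj2 ?A ** (?A - ?B)) \<le> 8 * norm (adj2 ?A) * norm (?A - ?B)"
    by (rule norm_mat2_mult_le)
  also have "\<dots> \<le> 8 * (4 * norm ?A) * norm (?A - ?B)"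
    by (intro mult_right_mono mult_left_mono norm_adj2_le) auto
  finally show ?thesis by simp
qed

text \<open>Otherwise two distinct elements g, h with close matrices exist, and g\<inverse>h is a
  nontrivial element close to the identity.\<close>
lemma kleinian_finite_norm_le:
  assumes K: "kleinian G"
  shows "finite {g \<in> G. norm (psl_mat g) \<le> B}"
proof (rule ccontr)
  define S where "S = {g \<in> G. norm (psl_mat g) \<le> B}"
  assume "infinite {g \<in> G. norm (psl_mat g) \<le> B}"
  then have inf: "infinite S" by (simp add: S_def)
  obtain e where e: "e > 0" "\<And>h. h \<in> G \<Longrightarrow> h \<noteq> psl_one \<Longrightarrow> e \<le> psl_dist psl_one h"
    using kleinian_dist_one[OF K] by blast
  have B: "B \<ge> 0" using inf unfolding S_def by (metis (lifting) finite.emptyI ex_in_conv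
        mem_Collect_eq norm_ge_zero order_trans)
  have "inj_on psl_mat S" by (meson inj_onI psl_eq_iff)
  then have "infinite (psl_mat ` S)" using inf finite_imageD by blast
  moreover have "psl_mat ` S \<subseteq> cball 0 B" unfolding S_def by auto
  ultimately obtain X where X: "X islimpt (psl_mat ` S)"
    using Heine_Borel_imp_Bolzano_Weierstrass[OF compact_cball] by blast
  define d where "d = e / (64 * (B + 1))"
  have "d > 0" using e B by (simp add: d_def)
  then obtain A where A: "A \<in> psl_mat ` S" "A \<noteq> X" "dist A X < d"
    using X unfolding islimpt_approachable by blast
  then obtain A' where A': "A' \<in> psl_mat ` S" "A' \<noteq> X" "dist A' X < dist A X"
    using X unfolding islimpt_approachable by (metis zero_less_dist_iff)
  obtain g h where gh: "g \<in> S" "A = psl_mat g" "h \<in> S" "A' = psl_mat h"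
    using A A' by blast
  have "norm (A - A') < 2 * d"
    using A(3) A'(3) dist_triangle2[of A A' X] by (simp add: dist_norm)
  have "psl_mult (psl_inv g) h \<in> G" using gh K kleinian_mult kleinian_inv by (simp add: S_def)
  moreover have "psl_mult (psl_inv g) h \<noteq> psl_one"
    using gh A'(3) psl_mult_left_cancel[of "psl_inv g" h g] by force
  ultimately have "e \<le> psl_dist psl_one (psl_mult (psl_inv g) h)" by (rule e(2))
  also have "\<dots> \<le> 32 * norm A * norm (A - A')"
    using gh psl_dist_one_quotient_le by simp
  also have "\<dots> \<le> 32 * B * (2 * d)"
    using gh \<open>norm (A - A') < 2 * d\<close> B by (intro mult_mono) (auto simp: S_def)
  also have "\<dots> < e" using e \<open>d > 0\<close> B unfolding d_def by (simp add: field_simps)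
  finally show False by simp
qed

lemma kleinian_countable:
  assumes "kleinian G"
  shows "countable G"
proof -
  have "G \<subseteq> (\<Union>n::nat. {g \<in> G. norm (psl_mat g) \<le> real n})"
    using real_arch_simple by blast
  moreover have "countable (\<Union>n::nat. {g \<in> G. norm (psl_mat g) \<le> real n})"
    by (rule countable_UN) (auto intro: countable_finite kleinian_finite_norm_le[OF assms])
  ultimately show ?thesis using countable_subset by blast
qed

lemma kleinian_norm_tendsto_infinity:
  assumes "kleinian G" "range g \<subseteq> G" "inj g"
  shows "filterlim (\<lambda>n. norm (psl_mat (g n))) at_top sequentially"
  unfolding filterlim_at_top cofinite_eq_sequentially[symmetric] eventually_cofinite
proof
  fix Z
  have "{n. \<not> Z \<le> norm (psl_mat (g n))} \<subseteq> g -` {h \<in> G. norm (psl_mat h) \<le> Z}"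
    using assms(2) by auto
  moreover have "finite (g -` {h \<in> G. norm (psl_mat h) \<le> Z})"
    using finite_vimageI[OF kleinian_finite_norm_le[OF assms(1)] assms(3)] .
  ultimately show "finite {n. \<not> Z \<le> norm (psl_mat (g n))}" by (rule finite_subset)
qed

section \<open>The Riemann sphere as a projective line\<close>

definition proj :: "complex^2 \<Rightarrow> complex option" where
  "proj u = (if u$2 = 0 then None else Some (u$1 / u$2))"

definition det2 :: "complex^2 \<Rightarrow> complex^2 \<Rightarrow> complex" where
  "det2 u v = u$1 * v$2 - u$2 * v$1"

lemma proj_surj:
  obtains u where "u \<noteq> 0" "p = proj u"
proof (cases p)
  case None
  then show ?thesis
    by (intro that[of "vector [1, 0]"]) (simp_all add: vec2_nonzero_iff proj_def vector_2)
next
  case (Some z)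
  then show ?thesis
    by (intro that[of "vector [z, 1]"]) (simp_all add: vec2_nonzero_iff proj_def vector_2)
qed

lemma proj_scaleR: "c \<noteq> 0 \<Longrightarrow> proj (c *\<^sub>R v) = proj v"
  by (simp del: vector_scaleR_component add: proj_def vec2_scaleR_nth)

lemma det2_mat_vec: "det2 (M *v a) (M *v b) = det M * det2 a b"
  by (simp add: det2_def mat2_mult_vec_nth det_2 algebra_simps)

lemma det2_scale_eigen: "det2 (k *s a) (P *v (k *s a)) = k\<^sup>2 * det2 a (P *v a)"
  by (simp add: det2_def mat2_mult_vec_nth algebra_simps power2_eq_square)

lemma det2_eq_0_imp_parallel:
  assumes "u \<noteq> 0" "det2 u w = 0"
  obtains k where "w = k *s u"
proof (cases "u$1 = 0")
  case True
  then have "u$2 \<noteq> 0" using assms vec2_nonzero_iff by blast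
  then show ?thesis using assms True
    by (intro that[of "w$2 / u$2"]) (auto simp: vec2_eq_iff det2_def field_simps)
next
  case False
  then show ?thesis using assms
    by (intro that[of "w$1 / u$1"]) (auto simp: vec2_eq_iff det2_def field_simps)
qed

lemma mobius_mat_proj:
  assumes "det M \<noteq> 0" "u \<noteq> 0"
  shows "mobius_mat M (proj u) = proj (M *v u)"
proof (cases "u$2 = 0")
  case True
  then have "u$1 \<noteq> 0" using assms(2) vec2_nonzero_iff by blast
  then show ?thesis using True
    by (auto simp: mobius_mat_def proj_def mat2_mult_vec_nth Let_def)
next
  case False
  have ne: "M$1$1 * u$1 + M$1$2 * u$2 \<noteq> 0" if "M$2$1 * u$1 + M$2$2 * u$2 = 0"
  proof
    assume h: "M$1$1 * u$1 + M$1$2 * u$2 = 0"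
    have "det M * u$2 =
        M$1$1 * (M$2$1 * u$1 + M$2$2 * u$2) - M$2$1 * (M$1$1 * u$1 + M$1$2 * u$2)"
      by (simp add: det_2 algebra_simps)
    then show False using h that assms(1) False by simp
  qed
  have "M$2$1 * (u$1 / u$2) + M$2$2 = (M$2$1 * u$1 + M$2$2 * u$2) / u$2"
    "M$1$1 * (u$1 / u$2) + M$1$2 = (M$1$1 * u$1 + M$1$2 * u$2) / u$2"
    using False by (simp_all add: field_simps)
  then show ?thesis using False ne
    by (auto simp: mobius_mat_def proj_def mat2_mult_vec_nth Let_def)
qed

lemma psl_act_proj: "u \<noteq> 0 \<Longrightarrow> psl_act g (proj u) = proj (psl_mat g *v u)"
  by (subst psl_rep_eq) (simp add: psl_act.abs_eq psl_mat_def mobius_mat_proj)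

lemma chordal_proj:
  assumes u: "u \<noteq> 0" and v: "v \<noteq> 0"
  shows "chordal (proj u) (proj v) = 2 * cmod (det2 u v) / (norm u * norm v)"
proof -
  have norm: "norm w = sqrt ((cmod (w$1))\<^sup>2 + (cmod (w$2))\<^sup>2)" for w :: "complex^2"
    by (simp add: norm_vec_def L2_set_def sum_2)
  have affine: "sqrt (1 + (cmod (w$1 / w$2))\<^sup>2) = norm w / cmod (w$2)"
    if "w$2 \<noteq> 0" for w :: "complex^2"
  proof -
    have "1 + (cmod (w$1 / w$2))\<^sup>2 = (norm w)\<^sup>2 / (cmod (w$2))\<^sup>2"
      using that by (simp add: norm norm_divide power_divide field_simps)
    then show ?thesis by (simp add: real_sqrt_divide)
  qed
  have at_infinity: "norm w = cmod (w$1)" if "w$2 = 0" for w :: "complex^2"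
    using that by (simp add: norm)
  have pos: "norm u > 0" "norm v > 0" using u v by auto
  consider "u$2 = 0" "v$2 = 0" | "u$2 = 0" "v$2 \<noteq> 0" | "u$2 \<noteq> 0" "v$2 = 0"
    | "u$2 \<noteq> 0" "v$2 \<noteq> 0" by blast
  then show ?thesis
  proof cases
    case 1 then show ?thesis by (simp add: proj_def det2_def)
  next
    case 2
    then have "u$1 \<noteq> 0" using u vec2_nonzero_iff by blast
    then show ?thesis using 2 pos
      by (simp add: proj_def det2_def affine at_infinity norm_mult field_simps)
  next
    case 3
    then have "v$1 \<noteq> 0" using v vec2_nonzero_iff by blast
    then show ?thesis using 3 pos
      by (simp add: proj_def det2_def affine at_infinity norm_mult norm_minus_commute field_simps)
  next
    case 4
    have "u$1 / u$2 - v$1 / v$2 = det2 u v / (u$2 * v$2)"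
      using 4 by (simp add: det2_def field_simps)
    moreover have "chordal (proj u) (proj v) = 2 * cmod (u$1 / u$2 - v$1 / v$2) /
        (sqrt (1 + (cmod (u$1 / u$2))\<^sup>2) * sqrt (1 + (cmod (v$1 / v$2))\<^sup>2))"
      using 4 by (simp add: proj_def real_sqrt_mult)
    ultimately have "chordal (proj u) (proj v) =
        2 * (cmod (det2 u v) / (cmod (u$2) * cmod (v$2))) /
          (norm u / cmod (u$2) * (norm v / cmod (v$2)))"
      by (simp only: affine[OF 4(1)] affine[OF 4(2)]) (simp add: norm_divide norm_mult)
    then show ?thesis using 4 pos by (simp add: field_simps)
  qed
qed

lemma chordal_self [simp]: "chordal p p = 0"
  by (cases p) simp_all

lemma proj_eq_iff:
  assumes "u \<noteq> 0" "v \<noteq> 0"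
  shows "proj u = proj v \<longleftrightarrow> det2 u v = 0"
proof
  assume "proj u = proj v"
  then show "det2 u v = 0" using chordal_proj[OF assms] chordal_self[of "proj u"] assms by simp
next
  assume "det2 u v = 0"
  then obtain k where k: "v = k *s u" using assms(1) det2_eq_0_imp_parallel by blast
  then have "k \<noteq> 0" using assms(2) by auto
  then show "proj u = proj v" using k by (simp add: proj_def)
qed

lemma chordal_eq_0_iff: "chordal p q = 0 \<longleftrightarrow> p = q"
proof -
  obtain u v where "u \<noteq> 0" "p = proj u" "v \<noteq> 0" "q = proj v" by (metis proj_surj)
  then show ?thesis by (simp add: chordal_proj proj_eq_iff)
qed

lemma tendsto_chordal_proj:
  assumes lim: "v \<longlonglongrightarrow> v0" and "v0 \<noteq> 0" "\<And>n. v n \<noteq> 0" "w \<noteq> 0"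
  shows "(\<lambda>n. chordal (proj (v n)) (proj w)) \<longlonglongrightarrow> chordal (proj v0) (proj w)"
proof -
  have "(\<lambda>n. det2 (v n) w) \<longlonglongrightarrow> det2 v0 w"
    unfolding det2_def by (intro tendsto_intros lim)
  then have "(\<lambda>n. 2 * cmod (det2 (v n) w) / (norm (v n) * norm w)) \<longlonglongrightarrow>
      2 * cmod (det2 v0 w) / (norm v0 * norm w)"
    using assms by (intro tendsto_intros lim) auto
  then show ?thesis using assms by (simp add: chordal_proj)
qed

definition mat_fixpoints :: "complex^2^2 \<Rightarrow> complex option set" where
  "mat_fixpoints P = {proj v |v. v \<noteq> 0 \<and> det2 v (P *v v) = 0}"

lemma proj_mem_mat_fixpoints_iff:
  assumes "v \<noteq> 0"
  shows "proj v \<in> mat_fixpoints P \<longleftrightarrow> det2 v (P *v v) = 0"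
proof
  assume "proj v \<in> mat_fixpoints P"
  then obtain v' where v': "v' \<noteq> 0" "det2 v' (P *v v') = 0" "proj v = proj v'"
    unfolding mat_fixpoints_def by auto
  then obtain k where "v = k *s v'"
    using assms proj_eq_iff det2_eq_0_imp_parallel by metis
  then show "det2 v (P *v v) = 0" using v' by (simp add: det2_scale_eigen)
qed (use assms in \<open>auto simp: mat_fixpoints_def\<close>)

section \<open>Matrices commuting with a non-scalar matrix\<close>

definition non_scalar :: "complex^2^2 \<Rightarrow> bool" where
  "non_scalar P \<longleftrightarrow> P$1$2 \<noteq> 0 \<or> P$2$1 \<noteq> 0 \<or> P$1$1 \<noteq> P$2$2"

lemma scalar_commute: "\<not> non_scalar P \<Longrightarrow> P ** Q = Q ** P"
  unfolding non_scalar_def mat2_eq_iff by (simp add: mat2_mult_nth algebra_simps)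

lemma commute_non_scalar_affine:
  assumes "non_scalar P" "X ** P = P ** X"
  obtains a b where "X$1$1 = a + b * P$1$1" "X$1$2 = b * P$1$2" "X$2$1 = b * P$2$1"
    "X$2$2 = a + b * P$2$2"
proof -
  have "(X ** P)$i$j = (P ** X)$i$j" for i j using assms(2) by simp
  then have "X$1$1 * P$1$1 + X$1$2 * P$2$1 = P$1$1 * X$1$1 + P$1$2 * X$2$1"
    "X$1$1 * P$1$2 + X$1$2 * P$2$2 = P$1$1 * X$1$2 + P$1$2 * X$2$2"
    "X$2$1 * P$1$1 + X$2$2 * P$2$1 = P$2$1 * X$1$1 + P$2$2 * X$2$1"
    by (simp_all only: mat2_mult_nth)
  then have e: "X$1$2 * P$2$1 = P$1$2 * X$2$1"
    "P$1$2 * (X$1$1 - X$2$2) = X$1$2 * (P$1$1 - P$2$2)"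
    "P$2$1 * (X$1$1 - X$2$2) = X$2$1 * (P$1$1 - P$2$2)"
    by algebra+
  consider (upper) "P$1$2 \<noteq> 0" | (lower) "P$1$2 = 0" "P$2$1 \<noteq> 0"
    | (diagonal) "P$1$2 = 0" "P$2$1 = 0" "P$1$1 \<noteq> P$2$2"
    using assms(1) unfolding non_scalar_def by blast
  then show ?thesis
  proof cases
    case upper
    define b where "b = X$1$2 / P$1$2"
    show ?thesis
      by (rule that[of "X$1$1 - b * P$1$1" b]) (use upper e in \<open>simp_all add: b_def field_simps\<close>)
  next
    case lower
    define b where "b = X$2$1 / P$2$1"
    show ?thesis
      by (rule that[of "X$1$1 - b * P$1$1" b]) (use lower e in \<open>simp_all add: b_def field_simps\<close>)
  next
    case diagonal
    define b where "b = (X$1$1 - X$2$2) / (P$1$1 - P$2$2)"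
    have "b * (P$1$1 - P$2$2) = X$1$1 - X$2$2" using diagonal by (simp add: b_def)
    moreover have "X$1$2 = 0" "X$2$1 = 0" using diagonal e by simp_all
    ultimately show ?thesis
      using diagonal by (intro that[of "X$1$1 - b * P$1$1" b]) (simp_all add: algebra_simps)
  qed
qed

lemma commute_non_scalar_det2_eigen:
  assumes "non_scalar P" "X ** P = P ** X" "det2 v (P *v v) = 0"
  shows "det2 v (X *v v) = 0"
proof -
  obtain a b where ab: "X$1$1 = a + b * P$1$1" "X$1$2 = b * P$1$2" "X$2$1 = b * P$2$1"
    "X$2$2 = a + b * P$2$2"
    using commute_non_scalar_affine[OF assms(1,2)] by blast
  have "det2 v (X *v v) = b * det2 v (P *v v)"
    by (simp add: det2_def mat2_mult_vec_nth ab algebra_simps)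
  then show ?thesis using assms(3) by simp
qed

lemma centralizer_non_commuting_pair:
  assumes "non_scalar P" "X ** P = P ** X" "X ** Q = Q ** X" "P ** Q \<noteq> Q ** P" "det X = 1"
  shows "X = mat 1 \<or> X = - mat 1"
proof -
  obtain a b where ab: "X$1$1 = a + b * P$1$1" "X$1$2 = b * P$1$2" "X$2$1 = b * P$2$1"
    "X$2$2 = a + b * P$2$2"
    using commute_non_scalar_affine[OF assms(1,2)] by blast
  have "(X ** Q)$i$j - (Q ** X)$i$j = b * ((P ** Q)$i$j - (Q ** P)$i$j)" for i j
    using exhaust_2[of i] exhaust_2[of j] by (auto simp: mat2_mult_nth ab algebra_simps)
  then have "b = 0"
    using assms(3,4) by (metis (no_types) vec_eq_iff eq_iff_diff_eq_0 mult_eq_0_iff)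
  then have "a * a = 1" using assms(5) ab by (simp add: det_2)
  then have "a = 1 \<or> a = -1" by (simp only: square_eq_1_iff)
  then show ?thesis using ab \<open>b = 0\<close> by (auto simp: mat2_eq_iff)
qed

lemma quadratic_root_cases:
  fixes c e f z :: complex
  assumes "c \<noteq> 0" "c * z\<^sup>2 + e * z + f = 0"
  shows "z = (- e + csqrt (e\<^sup>2 - 4 * c * f)) / (2 * c) \<or> z = (- e - csqrt (e\<^sup>2 - 4 * c * f)) / (2 * c)"
proof -
  define s where "s = csqrt (e\<^sup>2 - 4 * c * f)"
  have "(2 * c * z + e)\<^sup>2 = 4 * c * (c * z\<^sup>2 + e * z + f) + (e\<^sup>2 - 4 * c * f)"
    by (simp add: power2_eq_square algebra_simps)
  then have "(2 * c * z + e)\<^sup>2 = s\<^sup>2" using assms(2) by (simp add: s_def power2_csqrt)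
  then consider "2 * c * z + e = s" | "2 * c * z + e = - s" using power2_eq_iff by blast
  then show ?thesis
  proof cases
    case 1
    have "z * (2 * c) = - e + s" by (simp add: algebra_simps flip: 1)
    then show ?thesis using assms(1) by (simp add: s_def eq_divide_eq)
  next
    case 2
    then have "s = - (2 * c * z + e)" by simp
    then have "z * (2 * c) = - e - s" by (simp add: algebra_simps)
    then show ?thesis using assms(1) by (simp add: s_def eq_divide_eq)
  qed
qed

text \<open>The fixed points of the Moebius map of P are the zeros of the binary quadratic form
  det2 v (P v) = P21 v1^2 + (P22 - P11) v1 v2 - P12 v2^2, which vanishes identically only for
  scalar P.\<close>
lemma mat_fixpoints_subset_pair:
  assumes "non_scalar P"
  obtains p q where "mat_fixpoints P \<subseteq> {p, q}"
proof -
  have form: "det2 v (P *v v) = P$2$1 * (v$1)\<^sup>2 + (P$2$2 - P$1$1) * v$1 * v$2 - P$1$2 * (v$2)\<^sup>2"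
    for v by (simp add: det2_def mat2_mult_vec_nth power2_eq_square algebra_simps)
  show ?thesis
  proof (cases "P$2$1 = 0")
    case False
    define c e f where "c = P$2$1" "e = P$2$2 - P$1$1" "f = - P$1$2"
    show ?thesis
    proof (rule that, rule subsetI)
      fix x assume "x \<in> mat_fixpoints P"
      then obtain v where v: "x = proj v" "v \<noteq> 0" "det2 v (P *v v) = 0"
        unfolding mat_fixpoints_def by blast
      have v2: "v$2 \<noteq> 0" using v(2,3) False by (auto simp: form vec2_nonzero_iff)
      have "c * (v$1 / v$2)\<^sup>2 + e * (v$1 / v$2) + f = det2 v (P *v v) / (v$2)\<^sup>2"
        using v2 by (simp add: form c_e_f_def power2_eq_square field_simps)
      then have "c * (v$1 / v$2)\<^sup>2 + e * (v$1 / v$2) + f = 0" using v(3) by simp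
      then have "v$1 / v$2 = (- e + csqrt (e\<^sup>2 - 4 * c * f)) / (2 * c) \<or>
          v$1 / v$2 = (- e - csqrt (e\<^sup>2 - 4 * c * f)) / (2 * c)"
        by (rule quadratic_root_cases[rotated]) (use False in \<open>simp add: c_e_f_def\<close>)
      then show "x \<in> {Some ((- e + csqrt (e\<^sup>2 - 4 * c * f)) / (2 * c)),
          Some ((- e - csqrt (e\<^sup>2 - 4 * c * f)) / (2 * c))}"
        using v(1) v2 by (auto simp: proj_def)
    qed
  next
    case True
    show ?thesis
    proof (rule that, rule subsetI)
      fix x assume "x \<in> mat_fixpoints P"
      then obtain v where v: "x = proj v" "v \<noteq> 0" "det2 v (P *v v) = 0"
        unfolding mat_fixpoints_def by blast
      show "x \<in> {None, Some (P$1$2 / (P$2$2 - P$1$1))}"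
      proof (cases "v$2 = 0")
        case False
        have "v$2 * ((P$2$2 - P$1$1) * v$1 - P$1$2 * v$2) = 0"
          using v(3) True by (simp add: form power2_eq_square algebra_simps)
        then have h: "(P$2$2 - P$1$1) * v$1 = P$1$2 * v$2" using False by simp
        then have "P$2$2 - P$1$1 \<noteq> 0"
          using assms True False unfolding non_scalar_def by auto
        then show ?thesis using h v(1) False by (simp add: proj_def field_simps)
      qed (use v in \<open>simp add: proj_def\<close>)
    qed
  qed
qed

lemma psl_mat_non_scalar:
  assumes "h \<noteq> psl_one"
  shows "non_scalar (psl_mat h)"
proof (rule ccontr)
  let ?H = "psl_mat h"
  assume "\<not> non_scalar ?H"
  then have e: "?H$1$2 = 0" "?H$2$1 = 0" "?H$1$1 = ?H$2$2" unfolding non_scalar_def by auto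
  then have "?H$1$1 * ?H$1$1 = 1" using det_psl_mat[of h] by (simp add: det_2)
  then have "?H$1$1 = 1 \<or> ?H$1$1 = -1" by (simp only: square_eq_1_iff)
  then have "?H = mat 1 \<or> ?H = - mat 1" using e by (auto simp: mat2_eq_iff)
  then show False using assms psl_eq_one_iff by blast
qed

lemma anticommute_trace_zero:
  assumes "det (A::complex^2^2) = 1" "A ** B = - (B ** A)"
  shows "B$1$1 + B$2$2 = 0"
proof -
  have "(adj2 A ** (A ** B + B ** A))$1$1 + (adj2 A ** (A ** B + B ** A))$2$2
      = 2 * det A * (B$1$1 + B$2$2)"
    by (simp add: mat2_mult_nth det_2 algebra_simps)
  moreover have "A ** B + B ** A = 0" using assms(2) by simp
  ultimately have "2 * (B$1$1 + B$2$2) = 0" using assms(1) by (simp add: mat2_mult_nth)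
  then show ?thesis by (simp only: mult_eq_0_iff) simp
qed

lemma trace_zero_square:
  assumes "det (B::complex^2^2) = 1" "B$1$1 + B$2$2 = 0"
  shows "B ** B = - mat 1"
proof -
  have "B$2$2 = - B$1$1" using assms(2) by (simp add: eq_neg_iff_add_eq_0 add.commute)
  moreover have "B$1$1 * B$2$2 - B$1$2 * B$2$1 = 1" using assms(1) by (simp add: det_2)
  ultimately show ?thesis unfolding mat2_eq_iff mat2_mult_nth by simp algebra
qed

text \<open>Commuting in PSL(2,C) only means that the lifts commute up to sign; an anticommuting
  lift would have trace zero and hence order two.\<close>
lemma kleinian_commute_mat:
  assumes K: "kleinian G" and h: "h \<in> G" "h \<noteq> psl_one" and c: "psl_mult g h = psl_mult h g"
  shows "psl_mat g ** psl_mat h = psl_mat h ** psl_mat g"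
proof (rule ccontr)
  assume "psl_mat g ** psl_mat h \<noteq> psl_mat h ** psl_mat g"
  then have "psl_mat g ** psl_mat h = - (psl_mat h ** psl_mat g)"
    using c unfolding psl_mult_eq_iff by blast
  then have "psl_mat h ** psl_mat h = - mat 1"
    using trace_zero_square anticommute_trace_zero det_psl_mat by blast
  moreover have "psl_mat psl_one ** psl_mat psl_one = mat 1"
    using psl_eq_one_iff[of psl_one] by (auto simp: mat_mul_lneg mat_mul_rneg)
  ultimately have "psl_mult h h = psl_mult psl_one psl_one"
    unfolding psl_mult_eq_iff by simp
  then have "psl_pow h 2 = psl_one" by (simp add: numeral_2_eq_2)
  then show False
    using K h unfolding kleinian_def torsion_free_def by (metis zero_less_numeral)
qed

section \<open>Limit sets of abelian subgroups\<close>

lemma normalized_escaping_limit: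
  fixes M :: "nat \<Rightarrow> complex^2^2"
  assumes det: "\<And>n. det (M n) = 1" and escape: "filterlim (\<lambda>n. norm (M n)) at_top sequentially"
  obtains R r where "strict_mono r" "R \<noteq> 0" "det R = 0"
    "(\<lambda>n. (1 / norm (M (r n))) *\<^sub>R M (r n)) \<longlonglongrightarrow> R"
proof -
  define N where "N n = (1 / norm (M n)) *\<^sub>R M n" for n
  have pos: "norm (M n) > 0" for n
    using det[of n] by (auto simp: det_2)
  then have "N n \<in> sphere 0 1" for n by (simp add: N_def)
  then obtain R r where R: "R \<in> sphere 0 1" "strict_mono r" "(N \<circ> r) \<longlonglongrightarrow> R"
    using compact_imp_seq_compact[OF compact_sphere] unfolding seq_compact_def by metis
  have "(\<lambda>n. det (N (r n))) \<longlonglongrightarrow> det R"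
    using R(3) unfolding det_2 o_def by (intro tendsto_intros)
  moreover have "(\<lambda>n. det (N (r n))) \<longlonglongrightarrow> 0"
  proof -
    have "det (N n) = of_real (inverse ((norm (M n))\<^sup>2))" for n
      by (simp add: N_def det_mat2_scaleR det power_one_over inverse_eq_divide)
    moreover have "filterlim (\<lambda>n. norm (M (r n))) at_top sequentially"
      using filterlim_compose[OF escape filterlim_subseq[OF R(2)]] by (simp add: o_def)
    then have "(\<lambda>n. inverse ((norm (M (r n)))\<^sup>2)) \<longlonglongrightarrow> 0"
      by (intro tendsto_inverse_0_at_top filterlim_pow_at_top) simp_all
    ultimately show ?thesis
      using tendsto_of_real[where 'a=complex] by fastforce
  qed
  ultimately have "det R = 0" using LIMSEQ_unique by blast
  moreover have "R \<noteq> 0" using R(1) by auto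
  ultimately show ?thesis using R(2,3) that by (simp add: N_def o_def)
qed

lemma commute_tendsto:
  fixes N :: "nat \<Rightarrow> complex^2^2"
  assumes "N \<longlonglongrightarrow> R" "\<And>n. N n ** P = P ** N n"
  shows "R ** P = P ** R"
proof -
  have "(R ** P)$i$j = (P ** R)$i$j" for i j
  proof (rule LIMSEQ_unique)
    show "(\<lambda>n. (N n ** P)$i$j) \<longlonglongrightarrow> (R ** P)$i$j"
      unfolding mat2_mult_nth by (intro tendsto_intros assms(1))
    show "(\<lambda>n. (N n ** P)$i$j) \<longlonglongrightarrow> (P ** R)$i$j"
      unfolding assms(2) mat2_mult_nth by (intro tendsto_intros assms(1))
  qed
  then show ?thesis by (simp add: vec_eq_iff)
qed

lemma mat2_eq_0_if_kills_independent:
  assumes "R *v a = 0" "R *v b = 0" "det2 a b \<noteq> 0"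
  shows "R = (0::complex^2^2)"
proof -
  have ab: "R$i$1 * a$1 + R$i$2 * a$2 = 0" "R$i$1 * b$1 + R$i$2 * b$2 = 0" for i
    using assms(1,2) by (metis mat2_mult_vec_nth zero_index)+
  have "R$i$1 * det2 a b = b$2 * (R$i$1 * a$1 + R$i$2 * a$2) - a$2 * (R$i$1 * b$1 + R$i$2 * b$2)"
    for i by (simp add: det2_def algebra_simps)
  then have "R$i$1 = 0" for i using ab assms(3) by simp
  have "R$i$2 * det2 a b = a$1 * (R$i$1 * b$1 + R$i$2 * b$2) - b$1 * (R$i$1 * a$1 + R$i$2 * a$2)"
    for i by (simp add: det2_def algebra_simps)
  then have "R$i$2 = 0" for i using ab assms(3) by simp
  with \<open>\<And>i. R$i$1 = 0\<close> show ?thesis by (simp add: mat2_eq_iff)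
qed

lemma singular_commuting_image_eigen:
  assumes "R \<noteq> 0" "det R = 0" "R ** P = P ** R" "det2 u (P *v u) \<noteq> 0"
  shows "R *v u \<noteq> 0" "det2 (R *v u) (P *v (R *v u)) = 0"
proof -
  have PR: "P *v (R *v u) = R *v (P *v u)"
    by (simp add: matrix_vector_mul_assoc assms(3))
  show "R *v u \<noteq> 0"
    using mat2_eq_0_if_kills_independent[of R u "P *v u"] PR assms(1,4) by auto
  show "det2 (R *v u) (P *v (R *v u)) = 0"
    unfolding PR det2_mat_vec assms(2) by simp
qed

lemma limit_set_finite:
  assumes "finite H"
  shows "limit_set H = {}"
proof (rule equals0I)
  fix x assume "x \<in> limit_set H"
  then obtain g :: "nat \<Rightarrow> PSL2C" where "range g \<subseteq> H" "inj g"
    unfolding limit_set_def by blast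
  then have "finite (UNIV :: nat set)"
    using assms finite_subset finite_imageD by metis
  then show False by simp
qed

text \<open>An orbit point outside the eigenlines of P escapes to the image of the limit R of the
  normalized matrices, which is an eigenline.\<close>
lemma escaping_orbit_limit_fixpoint:
  fixes M :: "nat \<Rightarrow> complex^2^2"
  assumes det: "\<And>n. det (M n) = 1" and escape: "filterlim (\<lambda>n. norm (M n)) at_top sequentially"
    and comm: "\<And>n. M n ** P = P ** M n"
    and u: "u \<noteq> 0" "det2 u (P *v u) \<noteq> 0" and w: "w \<noteq> 0"
    and lim: "(\<lambda>n. chordal (proj (M n *v u)) (proj w)) \<longlonglongrightarrow> 0"
  shows "proj w \<in> mat_fixpoints P"
proof -
  obtain R r where R: "strict_mono r" "R \<noteq> 0" "det R = 0"
    and RN: "(\<lambda>n. (1 / norm (M (r n))) *\<^sub>R M (r n)) \<longlonglongrightarrow> R"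
    using normalized_escaping_limit[OF det escape] by blast
  define N where "N n = (1 / norm (M (r n))) *\<^sub>R M (r n)" for n
  have pos: "norm (M n) > 0" for n using det[of n] by (auto simp: det_2)
  have "N n ** P = P ** N n" for n using comm by (simp add: N_def mat2_scaleR_mult)
  then have "R ** P = P ** R" using commute_tendsto RN by (simp add: N_def)
  then have Ru: "R *v u \<noteq> 0" "det2 (R *v u) (P *v (R *v u)) = 0"
    using singular_commuting_image_eigen R(2,3) u(2) by blast+
  have Nu: "N n *v u = (1 / norm (M (r n))) *\<^sub>R (M (r n) *v u)" for n
    by (simp add: N_def mat2_scaleR_mult_vec)
  then have "N n *v u \<noteq> 0" for n using pos mat2_mult_vec_nonzero[OF det u(1)] by simp
  moreover have "(\<lambda>n. N n *v u) \<longlonglongrightarrow> R *v u"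
    using RN unfolding N_def by (intro vec_tendstoI) (unfold mat2_mult_vec_nth, intro tendsto_intros)
  ultimately have "(\<lambda>n. chordal (proj (N n *v u)) (proj w)) \<longlonglongrightarrow> chordal (proj (R *v u)) (proj w)"
    using tendsto_chordal_proj Ru(1) w by blast
  moreover have "(\<lambda>n. chordal (proj (N n *v u)) (proj w)) \<longlonglongrightarrow> 0"
    using LIMSEQ_subseq_LIMSEQ[OF lim R(1)] Nu pos by (simp add: o_def proj_scaleR)
  ultimately have "proj w = proj (R *v u)"
    using LIMSEQ_unique chordal_eq_0_iff by metis
  then show ?thesis using proj_mem_mat_fixpoints_iff[OF Ru(1)] Ru(2) by simp
qed

lemma limit_set_subset_fixpoints:
  assumes K: "kleinian G" and HG: "H \<subseteq> G" and P: "non_scalar P"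
    and comm: "\<And>g. g \<in> H \<Longrightarrow> psl_mat g ** P = P ** psl_mat g"
  shows "limit_set H \<subseteq> mat_fixpoints P"
proof
  fix x assume "x \<in> limit_set H"
  then obtain z g where g: "\<And>n. g n \<in> H" "inj g"
    and lim: "(\<lambda>n. chordal (psl_act (g n) z) x) \<longlonglongrightarrow> 0"
    unfolding limit_set_def by blast
  obtain u where u: "u \<noteq> 0" "z = proj u" using proj_surj by blast
  obtain w where w: "w \<noteq> 0" "x = proj w" using proj_surj by blast
  have act: "psl_act (g n) z = proj (psl_mat (g n) *v u)" for n
    using u by (simp add: psl_act_proj)
  show "x \<in> mat_fixpoints P"
  proof (cases "det2 u (P *v u) = 0")
    case True
    have "det2 u (psl_mat (g n) *v u) = 0" for n
      using commute_non_scalar_det2_eigen[OF P comm[OF g(1)] True] .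
    then have "proj u = proj (psl_mat (g n) *v u)" for n
      using proj_eq_iff u(1) mat2_mult_vec_nonzero by simp
    then have "psl_act (g n) z = z" for n using act u(2) by simp
    then have "chordal z x = 0" using lim by (simp add: LIMSEQ_const_iff)
    then have "x = proj u" using u(2) by (simp add: chordal_eq_0_iff)
    then show ?thesis using proj_mem_mat_fixpoints_iff[OF u(1)] True by simp
  next
    case False
    have "filterlim (\<lambda>n. norm (psl_mat (g n))) at_top sequentially"
      using kleinian_norm_tendsto_infinity[OF K] g HG by blast
    then show ?thesis
      using escaping_orbit_limit_fixpoint[OF _ _ comm[OF g(1)] u(1) False w(1)] lim act w(2)
      by simp
  qed
qed

lemma kleinian_abelian_subgroup_elementary:
  assumes K: "kleinian G" and HG: "H \<subseteq> G"
    and comm: "\<And>a b. a \<in> H \<Longrightarrow> b \<in> H \<Longrightarrow> psl_mult a b = psl_mult b a"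
  shows "elementary H"
proof (cases "H \<subseteq> {psl_one}")
  case True
  then have "finite H" using finite_subset by blast
  then show ?thesis by (simp add: elementary_def limit_set_finite)
next
  case False
  then obtain h where h: "h \<in> H" "h \<noteq> psl_one" by blast
  obtain p q where pq: "mat_fixpoints (psl_mat h) \<subseteq> {p, q}"
    using mat_fixpoints_subset_pair[OF psl_mat_non_scalar[OF h(2)]] by blast
  have "limit_set H \<subseteq> {p, q}"
    using limit_set_subset_fixpoints[OF K HG psl_mat_non_scalar[OF h(2)]]
      kleinian_commute_mat[OF K] HG h comm pq by blast
  moreover have "card {p, q} \<le> 2" by (simp add: card_insert_if)
  ultimately show ?thesis
    unfolding elementary_def by (meson card_mono finite.emptyI finite_insert finite_subset le_trans)
qed

section \<open>Conjugators of a non-commuting pair\<close>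

lemma conj_eq_imp_commute:
  assumes "det P = 1" "det Q = 1" "P ** X ** adj2 P = Q ** X ** adj2 Q"
  shows "(adj2 Q ** P) ** X = X ** (adj2 Q ** P)"
proof -
  have cancel: "Y ** adj2 P ** P = Y" for Y
    by (simp add: assms(1) adj2_mult flip: matrix_mul_assoc)
  have "adj2 Q ** (P ** X ** adj2 P) ** P = adj2 Q ** (Q ** X ** adj2 Q) ** P"
    by (simp add: assms(3))
  then show ?thesis by (simp add: matrix_mul_assoc adj2_mult assms(2) cancel)
qed

lemma psl_conjugator_unique:
  assumes AB: "A ** B \<noteq> B ** A"
    and eqA: "psl_mat p ** A ** adj2 (psl_mat p) = psl_mat q ** A ** adj2 (psl_mat q)"
    and eqB: "psl_mat p ** B ** adj2 (psl_mat p) = psl_mat q ** B ** adj2 (psl_mat q)"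
  shows "p = q"
proof -
  define M where "M = adj2 (psl_mat q) ** psl_mat p"
  have "M ** A = A ** M" "M ** B = B ** M"
    unfolding M_def using conj_eq_imp_commute det_psl_mat eqA eqB by blast+
  moreover have "det M = 1" by (simp add: M_def det_mul det_adj2)
  moreover have "non_scalar A" using scalar_commute AB by blast
  ultimately have "M = mat 1 \<or> M = - mat 1"
    using centralizer_non_commuting_pair AB by metis
  moreover have "psl_mat q ** M = psl_mat p"
    by (simp add: M_def matrix_mul_assoc mult_adj2)
  ultimately show ?thesis by (auto simp: psl_eq_iff mat_mul_rneg)
qed

lemma countable_subsingleton: "(\<And>x y. x \<in> A \<Longrightarrow> y \<in> A \<Longrightarrow> x = y) \<Longrightarrow> countable A"
  by (metis countable_empty countable_insert empty_iff insertI1 subsetI countable_subset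
      singletonD)

lemma countable_conjugators:
  assumes "countable S"
  shows "countable {p. \<exists>A\<in>S. \<exists>B\<in>S. A ** B \<noteq> B ** A \<and>
    psl_mat p ** A ** adj2 (psl_mat p) \<in> S \<and> psl_mat p ** B ** adj2 (psl_mat p) \<in> S}"
proof -
  define C where "C = (\<lambda>(A, B, A', B'). {p. A ** B \<noteq> B ** A \<and>
    psl_mat p ** A ** adj2 (psl_mat p) = A' \<and> psl_mat p ** B ** adj2 (psl_mat p) = B'})"
  have "countable (C (A, B, A', B'))" for A B A' B'
    unfolding C_def by (rule countable_subsingleton) (simp, metis psl_conjugator_unique)
  then have "countable (C t)" for t by (cases t) simp
  then have "countable (\<Union>t \<in> S \<times> S \<times> S \<times> S. C t)"
    using assms by (intro countable_UN countable_SIGMA) auto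
  then show ?thesis by (rule countable_subset[rotated]) (force simp: C_def)
qed

lemma nonelementary_conj_inter_noncommuting:
  assumes "kleinian \<Gamma>" "\<not> elementary (psl_conj_set \<psi> \<Gamma> \<inter> \<Gamma>)"
  obtains g1 g2 where "g1 \<in> \<Gamma>" "g2 \<in> \<Gamma>" "psl_mat g1 ** psl_mat g2 \<noteq> psl_mat g2 ** psl_mat g1"
    "psl_mult (psl_mult \<psi> g1) (psl_inv \<psi>) \<in> \<Gamma>" "psl_mult (psl_mult \<psi> g2) (psl_inv \<psi>) \<in> \<Gamma>"
proof -
  obtain g1 g2 where g: "g1 \<in> \<Gamma>" "g2 \<in> \<Gamma>"
    and h: "psl_mult (psl_mult \<psi> g1) (psl_inv \<psi>) \<in> \<Gamma>" "psl_mult (psl_mult \<psi> g2) (psl_inv \<psi>) \<in> \<Gamma>"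
    and nc: "psl_mult (psl_mult (psl_mult \<psi> g1) (psl_inv \<psi>)) (psl_mult (psl_mult \<psi> g2) (psl_inv \<psi>))
      \<noteq> psl_mult (psl_mult (psl_mult \<psi> g2) (psl_inv \<psi>)) (psl_mult (psl_mult \<psi> g1) (psl_inv \<psi>))"
    using kleinian_abelian_subgroup_elementary[OF assms(1), of "psl_conj_set \<psi> \<Gamma> \<inter> \<Gamma>"] assms(2)
    unfolding psl_conj_set_def by blast
  have "psl_mult g1 g2 \<noteq> psl_mult g2 g1" using nc by (auto simp: psl_conj_mult)
  then have "psl_mat g1 ** psl_mat g2 \<noteq> psl_mat g2 ** psl_mat g1"
    by (auto simp: psl_mult_eq_iff)
  then show ?thesis using that g h by blast
qed

theorem mainTheorem19:
  assumes "kleinian \<Gamma>"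
  shows "countable {\<psi>. \<not> elementary (psl_conj_set \<psi> \<Gamma> \<inter> \<Gamma>)}"
proof -
  define S where "S = psl_mat ` \<Gamma> \<union> uminus ` psl_mat ` \<Gamma>"
  have conj_in_S: "psl_mat \<psi> ** psl_mat g ** adj2 (psl_mat \<psi>) \<in> S"
    if "psl_mult (psl_mult \<psi> g) (psl_inv \<psi>) \<in> \<Gamma>" for \<psi> g
    using that psl_conj_mat[of \<psi> g] unfolding S_def by blast
  have "{\<psi>. \<not> elementary (psl_conj_set \<psi> \<Gamma> \<inter> \<Gamma>)} \<subseteq> {p. \<exists>A\<in>S. \<exists>B\<in>S. A ** B \<noteq> B ** A \<and>
    psl_mat p ** A ** adj2 (psl_mat p) \<in> S \<and> psl_mat p ** B ** adj2 (psl_mat p) \<in> S}"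
  proof (intro subsetI CollectI)
    fix \<psi> assume "\<psi> \<in> {\<psi>. \<not> elementary (psl_conj_set \<psi> \<Gamma> \<inter> \<Gamma>)}"
    then obtain g1 g2 where "g1 \<in> \<Gamma>" "g2 \<in> \<Gamma>" "psl_mat g1 ** psl_mat g2 \<noteq> psl_mat g2 ** psl_mat g1"
      "psl_mult (psl_mult \<psi> g1) (psl_inv \<psi>) \<in> \<Gamma>" "psl_mult (psl_mult \<psi> g2) (psl_inv \<psi>) \<in> \<Gamma>"
      using nonelementary_conj_inter_noncommuting[OF assms] by blast
    then show "\<exists>A\<in>S. \<exists>B\<in>S. A ** B \<noteq> B ** A \<and>
        psl_mat \<psi> ** A ** adj2 (psl_mat \<psi>) \<in> S \<and> psl_mat \<psi> ** B ** adj2 (psl_mat \<psi>) \<in> S"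
      using conj_in_S unfolding S_def by blast
  qed
  moreover have "countable S" using kleinian_countable[OF assms] by (simp add: S_def)
  ultimately show ?thesis using countable_conjugators countable_subset by blast
qed

end
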